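(* Let $K:[0,\infty)\to[0,\infty)$ be a $K$-function (see context) and let $U=\{D(z_n,r_n)\}_n$ be a $K$-set. Let $\phi\in[0,2\pi]$. Then the set $C\subset(0,\infty)$ of those $c>0$ for which the boundary curve $\partial\Lambda(K,\phi,c)$ intersects infinitely many of the discs $D(z_n,r_n)$ has Lebesgue measure zero. Moreover, the projection $E$ of $U$ onto $[1,\infty)$ satisfies $\int_E\frac{dx}{K(x)}<\infty$.
   Context: A $K$-function is a function $K:[0,\infty)\to[0,\infty)$ that is strictly increasing, continuous and concave, with $K(x_0)=0$ for some $x_0\ge 0$, and that satisfies the doubling condition: there exist constants $\alpha\in(1,2]$ and $R\ge1$ such that $K(2x)\le \alpha K(x)$ for all $x\ge R$. For $z_0\in\mathbb{C}$, $r>0$, $D(z_0,r)=\{z:|z-z_0|<r\}$. A $K$-set is a countable collection of discs $D(z_n,r_n)$ with $z_n\in\mathbb{C}$, $|z_n|\to\infty$, $r_n>0$ and $\sum_n \frac{r_n}{K(|z_n|)}<\infty$. For $\phi\in[0,2\pi]$ and $c>0$, $\Lambda(K,\phi,c)=\{z\in\mathbb{C}: |\operatorname{Im}(ze^{-i\phi})|\le cK(\operatorname{Re}(ze^{-i\phi})),\ \operatorname{Re}(ze^{-i\phi})\ge x_0\}$ (for $\phi=0$ its boundary consists of the curves $y=\pm cK(x)$, $x\ge x_0$). The projection of a collection $U$ of discs onto $[1,\infty)$ is $E=\{|z|: z\in\bigcup_n D(z_n,r_n)\}\cap[1,\infty)$. *)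

theory Defs
  imports "HOL-Analysis.Analysis"
begin

definition K_function :: "(real \<Rightarrow> real) \<Rightarrow> bool" where
  "K_function K \<longleftrightarrow>
     (\<forall>x\<ge>0. K x \<ge> 0) \<and>
     strict_mono_on {0..} K \<and>
     continuous_on {0..} K \<and>
     concave_on {0..} K \<and>
     (\<exists>x0\<ge>0. K x0 = 0) \<and>
     (\<exists>\<alpha> R. 1 < \<alpha> \<and> \<alpha> \<le> 2 \<and> R \<ge> 1 \<and> (\<forall>x\<ge>R. K (2 * x) \<le> \<alpha> * K x))"

definition K_set :: "(real \<Rightarrow> real) \<Rightarrow> (nat \<Rightarrow> complex) \<Rightarrow> (nat \<Rightarrow> real) \<Rightarrow> bool" where
  "K_set K z r \<longleftrightarrow>
     filterlim (\<lambda>n. norm (z n)) at_top sequentially \<and>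
     (\<forall>n. r n > 0) \<and>
     summable (\<lambda>n. r n / K (norm (z n)))"

definition Lambda_set :: "(real \<Rightarrow> real) \<Rightarrow> real \<Rightarrow> real \<Rightarrow> real \<Rightarrow> complex set" where
  "Lambda_set K x0 \<phi> c =
     {z. \<bar>Im (z * cis (-\<phi>))\<bar> \<le> c * K (Re (z * cis (-\<phi>))) \<and> Re (z * cis (-\<phi>)) \<ge> x0}"

definition projection_set :: "(nat \<Rightarrow> complex) \<Rightarrow> (nat \<Rightarrow> real) \<Rightarrow> real set" where
  "projection_set z r = {norm w | w. \<exists>n. w \<in> ball (z n) (r n)} \<inter> {1..}"

end

theory Submission
  imports Defs
begin

text \<open>
  Rotating by \<open>-\<phi>\<close>, the frontier of \<open>\<Lambda>(K,\<phi>,c)\<close> lies on the curve \<open>|y| = c K(x)\<close>, \<open>x \<ge> 0\<close>.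
  If two such curves with parameters \<open>c, c' \<le> m\<close> meet the same disc \<open>D(z\<^sub>n, r\<^sub>n)\<close>, then
  concavity of \<open>K\<close> with \<open>K(0) = 0\<close> gives \<open>|c - c'| \<le> M\<^sub>m r\<^sub>n / K(|z\<^sub>n|)\<close> for large \<open>n\<close>.
  So the parameters hitting the \<open>n\<close>-th disc lie in an interval whose lengths are summable,
  and by Borel-Cantelli almost no \<open>c\<close> lies in infinitely many of them. For the projection,
  the \<open>n\<close>-th disc projects into \<open>[|z\<^sub>n| - r\<^sub>n, |z\<^sub>n| + r\<^sub>n]\<close>, where \<open>1/K \<le> 2/K(|z\<^sub>n|)\<close> once
  \<open>r\<^sub>n \<le> |z\<^sub>n|/2\<close>.
\<close>

lemma null_sets_in_infinitely_many_small_sets: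
  fixes S :: "nat \<Rightarrow> real set" and \<delta> :: "nat \<Rightarrow> real"
  assumes "summable \<delta>" "\<And>n. 0 \<le> \<delta> n"
    and "\<forall>\<^sub>F n in sequentially. \<forall>c\<in>S n. \<forall>c'\<in>S n. \<bar>c - c'\<bar> \<le> \<delta> n"
  shows "{c. infinite {n. c \<in> S n}} \<in> null_sets lebesgue"
proof -
  obtain N where N: "\<And>n c c'. N \<le> n \<Longrightarrow> c \<in> S n \<Longrightarrow> c' \<in> S n \<Longrightarrow> \<bar>c - c'\<bar> \<le> \<delta> n"
    using assms(3) by (auto simp: eventually_sequentially)
  define B where "B n = (if N \<le> n then cball (SOME c. c \<in> S n) (\<delta> n) else {})" for n
  have S_subset_B: "S n \<subseteq> B n" if "N \<le> n" for n
  proof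
    fix c assume "c \<in> S n"
    then have "(SOME c. c \<in> S n) \<in> S n" by (rule someI)
    with \<open>c \<in> S n\<close> show "c \<in> B n"
      using N[OF that] that by (auto simp: B_def dist_real_def)
  qed
  have measure_B: "measure lborel (B n) \<le> 2 * \<delta> n" for n
    using assms(2)[of n] by (simp add: B_def cball_eq_atLeastAtMost)
  have "summable (\<lambda>n. measure lborel (B n))"
    by (rule summable_comparison_test'[OF summable_mult[OF assms(1), of 2]]) (simp add: measure_B)
  then have "limsup B \<in> null_sets lborel"
    using assms(2) by (intro borel_cantelli_limsup1) (auto simp: B_def cball_eq_atLeastAtMost)
  moreover have "{c. infinite {n. c \<in> S n}} \<subseteq> limsup B"
  proof
    fix c assume "c \<in> {c. infinite {n. c \<in> S n}}"
    have "\<exists>n\<ge>M. c \<in> B n" for M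
    proof -
      obtain n where "max M N \<le> n" "c \<in> S n"
        using \<open>c \<in> _\<close> unfolding infinite_nat_iff_unbounded_le by blast
      then show ?thesis
        using S_subset_B[of n] by auto
    qed
    then show "c \<in> limsup B"
      unfolding limsup_INF_SUP by auto
  qed
  ultimately show ?thesis
    using null_sets_completion_subset null_sets_completionI by blast
qed

lemma abs_norm_diff_less_of_mem_ball:
  fixes w :: "'a::real_normed_vector"
  shows "w \<in> ball a \<rho> \<Longrightarrow> \<bar>norm w - norm a\<bar> < \<rho>"
  using norm_triangle_ineq3[of w a] by (simp add: dist_norm norm_minus_commute)

lemma nn_integral_le_step_function:
  fixes f :: "real \<Rightarrow> ennreal" and a b h :: "nat \<Rightarrow> real"
  assumes "\<And>x. x \<in> E \<Longrightarrow> \<exists>n. x \<in> {a n..b n} \<and> f x \<le> ennreal (h n)"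
    and "\<And>n. a n \<le> b n" "\<And>n. 0 \<le> h n"
  shows "(\<integral>\<^sup>+ x \<in> E. f x \<partial>lborel) \<le> (\<Sum>n. ennreal (h n * (b n - a n)))"
proof -
  define g where "g n x = ennreal (h n) * indicator {a n..b n} x" for n x
  have "f x * indicator E x \<le> (\<Sum>n. g n x)" for x
  proof (cases "x \<in> E")
    case True
    then obtain n where "x \<in> {a n..b n}" "f x \<le> ennreal (h n)"
      using assms(1) by blast
    then have "f x * indicator E x \<le> g n x"
      using True by (simp add: g_def)
    also have "\<dots> \<le> (\<Sum>n. g n x)"
      using sum_le_suminf[of "\<lambda>n. g n x" "{n}"] by simp
    finally show ?thesis .
  qed simp
  then have "(\<integral>\<^sup>+ x \<in> E. f x \<partial>lborel) \<le> (\<integral>\<^sup>+ x. (\<Sum>n. g n x) \<partial>lborel)"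
    by (intro nn_integral_mono) simp
  also have "\<dots> = (\<Sum>n. \<integral>\<^sup>+ x. g n x \<partial>lborel)"
    by (intro nn_integral_suminf) (simp add: g_def)
  also have "\<dots> = (\<Sum>n. ennreal (h n * (b n - a n)))"
    using assms(2,3) by (simp add: g_def nn_integral_cmult_indicator ennreal_mult)
  finally show ?thesis .
qed

definition K_curve :: "(real \<Rightarrow> real) \<Rightarrow> real \<Rightarrow> complex set" where
  "K_curve K c = {p. 0 \<le> Re p \<and> \<bar>Im p\<bar> = c * K (Re p)}"

locale K_fun =
  fixes K :: "real \<Rightarrow> real"
  assumes strict_mono: "strict_mono_on {0..} K"
    and continuous: "continuous_on {0..} K"
    and concave: "concave_on {0..} K"
    and K_0: "K 0 = 0"
begin

lemma K_less: "0 \<le> a \<Longrightarrow> a < b \<Longrightarrow> K a < K b"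
  using strict_mono by (auto simp: strict_mono_on_def)

lemma K_mono: "0 \<le> a \<Longrightarrow> a \<le> b \<Longrightarrow> K a \<le> K b"
  using K_less by (cases "a = b") (auto intro: less_imp_le)

lemma K_nonneg: "0 \<le> x \<Longrightarrow> 0 \<le> K x"
  using K_mono[of 0 x] K_0 by simp

lemma K_pos: "0 < x \<Longrightarrow> 0 < K x"
  using K_less[of 0 x] K_0 by simp

lemma K_scale: "0 \<le> t \<Longrightarrow> t \<le> 1 \<Longrightarrow> 0 \<le> x \<Longrightarrow> t * K x \<le> K (t * x)"
  using concave_onD[OF concave, of t 0 x] K_0 by simp

lemma K_le_ratio:
  assumes "0 < a" "a \<le> b"
  shows "K b \<le> K a * b / a"
proof -
  have "(a / b) * K b \<le> K ((a / b) * b)"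
    using assms by (intro K_scale) auto
  then show ?thesis
    using assms by (simp add: field_simps)
qed

lemma K_le_linear: "1 \<le> u \<Longrightarrow> K u \<le> K 1 * u"
  using K_le_ratio[of 1 u] by simp

lemma frontier_Lambda_set_subset:
  "frontier (Lambda_set K 0 \<phi> c) \<subseteq> {w. w * cis (-\<phi>) \<in> K_curve K c}"
proof -
  let ?g = "\<lambda>w. w * cis (-\<phi>)"
  define S0 where "S0 = {w. (0::real) \<le> Re (?g w)}"
  define S1 where "S1 = {w. (0::real) < Re (?g w)}"
  have cont_Re: "continuous_on UNIV (\<lambda>w. Re (?g w))" by (intro continuous_intros)
  have cont_Im: "continuous_on S (\<lambda>w. \<bar>Im (?g w)\<bar>)" for S by (intro continuous_intros)
  have cont_K: "continuous_on S (\<lambda>w. c * K (Re (?g w)))" if "S \<subseteq> S0" for S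
    using that by (intro continuous_intros continuous_on_compose2[OF continuous]) (auto simp: S0_def)
  have "closed S0"
    unfolding S0_def by (rule closed_Collect_le[OF continuous_on_const cont_Re])
  moreover have "Lambda_set K 0 \<phi> c = {w \<in> S0. \<bar>Im (?g w)\<bar> \<le> c * K (Re (?g w))}"
    unfolding Lambda_set_def S0_def by auto
  ultimately have closed_L: "closed (Lambda_set K 0 \<phi> c)"
    using continuous_on_closed_Collect_le[OF cont_Im cont_K] by auto
  have "open S1"
    unfolding S1_def by (rule open_Collect_less[OF continuous_on_const cont_Re])
  moreover obtain V where V: "open V" "V \<inter> S1 = {w \<in> S1. \<bar>Im (?g w)\<bar> < c * K (Re (?g w))}"
  proof -
    have "S1 \<subseteq> S0" by (auto simp: S0_def S1_def)
    then show thesis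
      using open_Collect_less_Int[OF cont_Im cont_K] that by blast
  qed
  ultimately have interior_L: "V \<inter> S1 \<subseteq> interior (Lambda_set K 0 \<phi> c)"
    by (intro interior_maximal open_Int) (auto simp: V(2) Lambda_set_def S1_def)
  show ?thesis
  proof
    fix w assume w: "w \<in> frontier (Lambda_set K 0 \<phi> c)"
    then have "w \<in> Lambda_set K 0 \<phi> c" "w \<notin> interior (Lambda_set K 0 \<phi> c)"
      using closed_L frontier_subset_closed by (auto simp: frontier_def)
    then show "w \<in> {w. ?g w \<in> K_curve K c}"
      using interior_L V(2) K_0 by (cases "Re (?g w) = 0") (auto simp: Lambda_set_def S1_def K_curve_def)
  qed
qed

lemma K_curve_Re_lower_bound:
  assumes "p \<in> K_curve K c" "0 \<le> c" "c \<le> m" "\<rho> / 2 < norm p" "2 * (1 + m * K 1) \<le> \<rho>"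
  shows "\<rho> \<le> 2 * (1 + m * K 1) * Re p"
proof -
  have norm_p: "norm p \<le> Re p + m * K (Re p)"
    using cmod_le[of p] assms(1-3) K_nonneg[of "Re p"] mult_right_mono[of c m "K (Re p)"]
    by (auto simp: K_curve_def)
  have "1 \<le> Re p"
  proof (rule ccontr)
    assume "\<not> 1 \<le> Re p"
    then have "m * K (Re p) \<le> m * K 1"
      using assms(1-3) K_mono[of "Re p" 1] by (intro mult_left_mono) (auto simp: K_curve_def)
    then have "norm p < 1 + m * K 1"
      using norm_p \<open>\<not> 1 \<le> Re p\<close> by linarith
    then show False
      using assms(4,5) by (simp add: field_simps)
  qed
  then have "m * K (Re p) \<le> m * (K 1 * Re p)"
    using assms(2,3) K_le_linear by (intro mult_left_mono) auto
  then show ?thesis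
    using norm_p assms(4) by (simp add: algebra_simps)
qed

lemma K_curve_parameter_diff:
  assumes "0 < u" "u \<le> u'" "0 \<le> c'" "c' \<le> m"
    and "\<bar>c * K u - c' * K u'\<bar> \<le> d" "u' - u \<le> d"
  shows "\<bar>c - c'\<bar> * K u \<le> d * (1 + m * K u / u)"
proof -
  have "K u' - K u \<le> K u * (u' - u) / u"
    using K_le_ratio[of u u'] assms(1,2) by (simp add: field_simps)
  also have "\<dots> \<le> K u * d / u"
    using assms(1,6) K_nonneg[of u] by (intro divide_right_mono mult_left_mono) auto
  finally have "c' * (K u' - K u) \<le> m * (K u * d / u)"
    using assms(1-4) K_nonneg[of u] K_mono[of u u']
    by (intro mult_mono) auto
  moreover have "0 \<le> c' * (K u' - K u)"
    using assms(1-3) K_mono[of u u'] by simp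
  moreover have "(c - c') * K u = (c * K u - c' * K u') + c' * (K u' - K u)"
    by (simp add: algebra_simps)
  moreover have "\<bar>c - c'\<bar> * K u = \<bar>(c - c') * K u\<bar>"
    using K_nonneg[of u] assms(1) by (simp add: abs_mult)
  ultimately have "\<bar>c - c'\<bar> * K u \<le> d + m * (K u * d / u)"
    using assms(5) by linarith
  then show ?thesis
    by (simp add: algebra_simps)
qed

lemma K_curve_parameter_close_ordered:
  assumes "p \<in> K_curve K c" "p' \<in> K_curve K c'" "0 \<le> c" "c \<le> m" "0 \<le> c'" "c' \<le> m"
    and "\<rho> / 2 < norm p" "norm (p - p') \<le> d" "2 * (1 + m * K 1) \<le> \<rho>"
    and le: "Re p \<le> Re p'"
  shows "\<bar>c - c'\<bar> \<le> 2 * (1 + m * K 1)\<^sup>2 * d / K \<rho>"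
proof -
  define A where "A = 1 + m * K 1"
  define u where "u = Re p"
  have "1 \<le> A"
    using assms(3,4) K_pos[of 1] by (simp add: A_def)
  have "2 * A \<le> \<rho>"
    using assms(9) by (simp add: A_def)
  have \<rho>_le: "\<rho> \<le> 2 * A * u"
    using K_curve_Re_lower_bound[OF assms(1,3,4,7,9)] by (simp add: A_def u_def)
  then have "2 * A * 1 \<le> 2 * A * u"
    using \<open>2 * A \<le> \<rho>\<close> by simp
  then have "1 \<le> u"
    using \<open>1 \<le> A\<close> mult_le_cancel_left_pos[of "2 * A" 1 u] by simp
  have "K \<rho> \<le> 2 * A * K (\<rho> / (2 * A))"
    using K_scale[of "1 / (2 * A)" \<rho>] \<open>1 \<le> A\<close> \<open>2 * A \<le> \<rho>\<close> by (simp add: field_simps)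
  also have "\<dots> \<le> 2 * A * K u"
    using \<rho>_le \<open>1 \<le> A\<close> \<open>2 * A \<le> \<rho>\<close> K_mono[of "\<rho> / (2 * A)" u] by (simp add: field_simps)
  finally have K\<rho>_le: "K \<rho> \<le> 2 * A * K u" .
  have "0 < K \<rho>"
    using K_pos[of \<rho>] \<open>1 \<le> A\<close> \<open>2 * A \<le> \<rho>\<close> by simp
  have "\<bar>c * K u - c' * K (Re p')\<bar> \<le> d"
    using abs_Im_le_cmod[of "p - p'"] assms(1,2,8) by (auto simp: K_curve_def u_def)
  moreover have "Re p' - u \<le> d"
    using abs_Re_le_cmod[of "p - p'"] assms(8) by (simp add: u_def)
  ultimately have "\<bar>c - c'\<bar> * K u \<le> d * (1 + m * K u / u)"
    using K_curve_parameter_diff[of u "Re p'" c' m c d] \<open>1 \<le> u\<close> assms(5,6) le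
    by (simp add: u_def)
  also have "\<dots> \<le> d * A"
  proof -
    have "m * K u \<le> m * (K 1 * u)"
      using K_le_linear[OF \<open>1 \<le> u\<close>] assms(3,4) by (intro mult_left_mono) auto
    then have "m * K u / u \<le> m * K 1"
      using \<open>1 \<le> u\<close> by (simp add: field_simps)
    moreover have "0 \<le> d"
      using assms(8) norm_ge_zero order_trans by blast
    ultimately show ?thesis
      unfolding A_def by (intro mult_left_mono) auto
  qed
  finally have "\<bar>c - c'\<bar> * K u \<le> d * A" .
  have "\<bar>c - c'\<bar> * K \<rho> \<le> \<bar>c - c'\<bar> * (2 * A * K u)"
    using K\<rho>_le by (intro mult_left_mono) auto
  also have "\<dots> \<le> 2 * A * (d * A)"
    using \<open>\<bar>c - c'\<bar> * K u \<le> d * A\<close> \<open>1 \<le> A\<close> by (simp add: mult.left_commute)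
  finally show ?thesis
    using \<open>0 < K \<rho>\<close> by (simp add: A_def power2_eq_square field_simps)
qed

lemma K_curve_parameter_close:
  assumes "p \<in> K_curve K c" "p' \<in> K_curve K c'" "0 \<le> c" "c \<le> m" "0 \<le> c'" "c' \<le> m"
    and "\<rho> / 2 < norm p" "\<rho> / 2 < norm p'" "norm (p - p') \<le> d" "2 * (1 + m * K 1) \<le> \<rho>"
  shows "\<bar>c - c'\<bar> \<le> 2 * (1 + m * K 1)\<^sup>2 * d / K \<rho>"
proof (cases "Re p \<le> Re p'")
  case True
  then show ?thesis
    using K_curve_parameter_close_ordered assms by blast
next
  case False
  then show ?thesis
    using K_curve_parameter_close_ordered[of p' c' p c m \<rho> d] assms
    by (simp add: norm_minus_commute abs_minus_commute)
qed

end

locale K_discs = K_fun +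
  fixes z :: "nat \<Rightarrow> complex" and r :: "nat \<Rightarrow> real"
  assumes norm_z_at_top: "filterlim (\<lambda>n. norm (z n)) at_top sequentially"
    and r_pos: "\<And>n. 0 < r n"
    and summable_r_K: "summable (\<lambda>n. r n / K (norm (z n)))"
begin

lemma eventually_far_small_disc:
  assumes "1 \<le> A"
  shows "\<forall>\<^sub>F n in sequentially. A \<le> norm (z n) \<and> r n \<le> norm (z n) / 2"
proof -
  have "\<forall>\<^sub>F n in sequentially. A \<le> norm (z n)"
    using norm_z_at_top by (simp add: filterlim_at_top)
  moreover have "\<forall>\<^sub>F n in sequentially. r n / K (norm (z n)) < 1 / (2 * K 1)"
    using summable_LIMSEQ_zero[OF summable_r_K] K_pos[of 1] by (intro order_tendstoD(2)) auto
  ultimately show ?thesis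
  proof eventually_elim
    case (elim n)
    have "1 \<le> norm (z n)"
      using elim assms by linarith
    then have "0 < K (norm (z n))"
      by (intro K_pos) linarith
    then have "r n < K (norm (z n)) / (2 * K 1)"
      using elim K_pos[of 1] by (simp add: field_simps)
    also have "\<dots> \<le> norm (z n) / 2"
      using K_le_linear[OF \<open>1 \<le> norm (z n)\<close>] K_pos[of 1] by (simp add: field_simps)
    finally show ?case
      using elim by simp
  qed
qed

lemma frontier_meets_infinitely_many_discs_null:
  assumes "0 \<le> m"
  shows "{c. 0 < c \<and> c \<le> m \<and> infinite {n. frontier (Lambda_set K 0 \<phi> c) \<inter> ball (z n) (r n) \<noteq> {}}}
           \<in> null_sets lebesgue"
proof -
  define A where "A = 1 + m * K 1"
  define S where "S n = {c. 0 < c \<and> c \<le> m \<and> frontier (Lambda_set K 0 \<phi> c) \<inter> ball (z n) (r n) \<noteq> {}}" for n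
  define \<delta> where "\<delta> n = 4 * A\<^sup>2 * (r n / K (norm (z n)))" for n
  have "1 \<le> A"
    using assms K_pos[of 1] by (simp add: A_def)
  have "\<forall>\<^sub>F n in sequentially. 2 * A \<le> norm (z n) \<and> r n \<le> norm (z n) / 2"
    using \<open>1 \<le> A\<close> by (intro eventually_far_small_disc) simp
  then have "\<forall>\<^sub>F n in sequentially. \<forall>c\<in>S n. \<forall>c'\<in>S n. \<bar>c - c'\<bar> \<le> \<delta> n"
  proof eventually_elim
    case (elim n)
    show ?case
    proof (intro ballI)
      fix c c' assume "c \<in> S n" "c' \<in> S n"
      then obtain w w' where
        w: "w * cis (-\<phi>) \<in> K_curve K c" "w \<in> ball (z n) (r n)" and
        w': "w' * cis (-\<phi>) \<in> K_curve K c'" "w' \<in> ball (z n) (r n)" and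
        c: "0 < c" "c \<le> m" "0 < c'" "c' \<le> m"
        using frontier_Lambda_set_subset unfolding S_def by blast
      have "norm (w - w') < 2 * r n"
        using w(2) w'(2) dist_triangle_less_add[of w "z n" "r n" w' "r n"]
        by (simp add: dist_commute dist_norm norm_minus_commute)
      moreover have "w * cis (-\<phi>) - w' * cis (-\<phi>) = (w - w') * cis (-\<phi>)"
        by (simp add: algebra_simps)
      moreover have "norm (z n) / 2 < norm w" "norm (z n) / 2 < norm w'"
        using abs_norm_diff_less_of_mem_ball[OF w(2)] abs_norm_diff_less_of_mem_ball[OF w'(2)] elim
        by linarith+
      ultimately have "\<bar>c - c'\<bar> \<le> 2 * A\<^sup>2 * (2 * r n) / K (norm (z n))"
        using K_curve_parameter_close[OF w(1) w'(1), of m "norm (z n)" "2 * r n"] c elim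
        by (simp add: A_def norm_mult)
      then show "\<bar>c - c'\<bar> \<le> \<delta> n"
        by (simp add: \<delta>_def)
    qed
  qed
  moreover have "summable \<delta>"
    unfolding \<delta>_def by (intro summable_mult summable_r_K)
  moreover have "0 \<le> \<delta> n" for n
    using r_pos[of n] K_nonneg[of "norm (z n)"] by (simp add: \<delta>_def)
  ultimately have "{c. infinite {n. c \<in> S n}} \<in> null_sets lebesgue"
    by (intro null_sets_in_infinitely_many_small_sets)
  moreover have "{c. 0 < c \<and> c \<le> m \<and> infinite {n. frontier (Lambda_set K 0 \<phi> c) \<inter> ball (z n) (r n) \<noteq> {}}}
      = {c. infinite {n. c \<in> S n}}"
    by (auto simp: S_def)
  ultimately show ?thesis
    by simp
qed

lemma projection_set_nn_integral_finite:
  "(\<integral>\<^sup>+ x \<in> projection_set z r. ennreal (1 / K x) \<partial>lborel) < \<infinity>"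
proof -
  obtain N where N: "\<And>n. N \<le> n \<Longrightarrow> 1 \<le> norm (z n) \<and> r n \<le> norm (z n) / 2"
    using eventually_far_small_disc[of 1] by (auto simp: eventually_sequentially)
  define h where "h n = (if N \<le> n then 2 / K (norm (z n)) else 1 / K 1)" for n
  have h_nonneg: "0 \<le> h n" for n
    using K_nonneg[of "norm (z n)"] K_pos[of 1] by (simp add: h_def)
  have "\<exists>n. x \<in> {norm (z n) - r n..norm (z n) + r n} \<and> ennreal (1 / K x) \<le> ennreal (h n)"
    if x_in: "x \<in> projection_set z r" for x
  proof -
    obtain w n where x: "x = norm w" "w \<in> ball (z n) (r n)" "1 \<le> x"
      using x_in unfolding projection_set_def by blast
    then have x_near: "\<bar>x - norm (z n)\<bar> < r n"
      using abs_norm_diff_less_of_mem_ball by blast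
    have "1 / K x \<le> h n"
    proof (cases "N \<le> n")
      case True
      have "K (norm (z n)) / 2 \<le> K (norm (z n) / 2)"
        using K_scale[of "1 / 2" "norm (z n)"] by simp
      also have "\<dots> \<le> K x"
        using N[OF True] x_near by (intro K_mono) auto
      finally have "K (norm (z n)) / 2 \<le> K x" .
      moreover have "0 < K (norm (z n))"
        using N[OF True] by (intro K_pos) linarith
      ultimately have "1 / K x \<le> 1 / (K (norm (z n)) / 2)"
        by (intro divide_left_mono) auto
      then show ?thesis
        using True by (simp add: h_def)
    next
      case False
      have "1 / K x \<le> 1 / K 1"
        using K_mono[of 1 x] K_pos[of 1] x(3) by (intro divide_left_mono) auto
      then show ?thesis
        using False by (simp add: h_def)
    qed
    then show ?thesis
      using x_near by (intro exI[of _ n]) (auto intro: ennreal_leI)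
  qed
  then have "(\<integral>\<^sup>+ x \<in> projection_set z r. ennreal (1 / K x) \<partial>lborel)
      \<le> (\<Sum>n. ennreal (h n * (norm (z n) + r n - (norm (z n) - r n))))"
    using r_pos h_nonneg by (intro nn_integral_le_step_function) (auto simp: less_imp_le)
  also have "\<dots> = (\<Sum>n. ennreal (h n * (2 * r n)))"
    by simp
  also have "\<dots> < \<infinity>"
  proof -
    have "summable (\<lambda>n. h n * (2 * r n))"
    proof (rule summable_comparison_test')
      show "summable (\<lambda>n. 4 * (r n / K (norm (z n))))"
        by (intro summable_mult summable_r_K)
      show "norm (h n * (2 * r n)) \<le> 4 * (r n / K (norm (z n)))" if "N \<le> n" for n
        using that r_pos[of n] K_nonneg[of "norm (z n)"] by (simp add: h_def)
    qed
    moreover have "0 \<le> h n * (2 * r n)" for n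
      using h_nonneg[of n] r_pos[of n] by simp
    ultimately have "(\<Sum>n. ennreal (h n * (2 * r n))) \<noteq> \<infinity>"
      unfolding infinity_ennreal_def by (rule ennreal_suminf_neq_top)
    then show ?thesis
      by (simp add: less_top)
  qed
  finally show ?thesis .
qed

end

theorem theorem1:
  fixes K :: "real \<Rightarrow> real" and x0 :: real and z :: "nat \<Rightarrow> complex" and r :: "nat \<Rightarrow> real"
    and \<phi> :: real
  assumes "K_function K" and "x0 \<ge> 0" and "K x0 = 0"
    and "K_set K z r"
    and "0 \<le> \<phi>" and "\<phi> \<le> 2 * pi"
  shows "{c::real. c > 0 \<and>
            infinite {n. frontier (Lambda_set K x0 \<phi> c) \<inter> ball (z n) (r n) \<noteq> {}}}
           \<in> null_sets lebesgue \<and>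
         (\<integral>\<^sup>+ x \<in> projection_set z r. ennreal (1 / K x) \<partial>lborel) < \<infinity>"
proof -
  have K_nonneg: "\<And>x. 0 \<le> x \<Longrightarrow> 0 \<le> K x" and K_strict_mono: "strict_mono_on {0..} K"
    using assms(1) unfolding K_function_def by auto
  have "x0 = 0"
    using K_nonneg[of 0] K_strict_mono assms(2,3) by (force simp: strict_mono_on_def)
  then interpret K_discs K z r
    using assms(1,3,4) unfolding K_function_def K_set_def by unfold_locales auto
  have "{c. c > 0 \<and> infinite {n. frontier (Lambda_set K x0 \<phi> c) \<inter> ball (z n) (r n) \<noteq> {}}}
      = (\<Union>k::nat. {c. 0 < c \<and> c \<le> real k \<and>
           infinite {n. frontier (Lambda_set K 0 \<phi> c) \<inter> ball (z n) (r n) \<noteq> {}}})"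
    using real_arch_simple \<open>x0 = 0\<close> by auto
  then show ?thesis
    using frontier_meets_infinitely_many_discs_null projection_set_nn_integral_finite by (simp add: null_sets_UN)
qed

end
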